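(* Let $\mathcal{H}$ be a complex Hilbert space of finite dimension $n\ge 2$, $m\ge 2$, and $\rho$ a density operator on $\mathcal{H}^{\otimes m}$ in reduced state consensus (RSC) such that each reduced state $\bar\rho_k$ is a pure state (rank one). Then $\rho$ is in symmetric state consensus (SSC).
   Context: The reduced states are $\bar\rho_k=\mathrm{Tr}_{\bigotimes_{j\neq k}\mathcal{H}_j}(\rho)$ (partial trace over all tensor factors except the $k$-th). $\rho$ is RSC if $\bar\rho_1=\cdots=\bar\rho_m$. For a permutation $\pi$ of $\{1,\dots,m\}$, $U_\pi$ is the unitary on $\mathcal{H}^{\otimes m}$ with $U_\pi(X_1\otimes\cdots\otimes X_m)U_\pi^\dagger=X_{\pi(1)}\otimes\cdots\otimes X_{\pi(m)}$; $\rho$ is SSC if $U_\pi\rho U_\pi^\dagger=\rho$ for all permutations $\pi$. *)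

theory Defs
  imports Complex_Main "HOL-Combinatorics.Permutations" "HOL-Library.FuncSet"
begin

(* H = C^n with orthonormal basis indexed by {0..<n}; H^{\<otimes>m} has the product basis
   indexed by tuples f : {0..<m} \<rightarrow> {0..<n} (extensional, value undefined outside).
   Operators on H^{\<otimes>m} are given by their matrices in this basis. *)

definition tidx :: "nat \<Rightarrow> nat \<Rightarrow> (nat \<Rightarrow> nat) set" where
  "tidx n m = PiE {0..<m} (\<lambda>_. {0..<n})"

type_synonym top = "(nat \<Rightarrow> nat) \<Rightarrow> (nat \<Rightarrow> nat) \<Rightarrow> complex"

definition density_op :: "nat \<Rightarrow> nat \<Rightarrow> top \<Rightarrow> bool" where
  "density_op n m \<rho> \<longleftrightarrow>
     (\<forall>f\<in>tidx n m. \<forall>g\<in>tidx n m. \<rho> g f = cnj (\<rho> f g)) \<and>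
     (\<forall>v :: (nat \<Rightarrow> nat) \<Rightarrow> complex.
        0 \<le> Re (\<Sum>f\<in>tidx n m. \<Sum>g\<in>tidx n m. cnj (v f) * \<rho> f g * v g)) \<and>
     (\<Sum>f\<in>tidx n m. \<rho> f f) = 1"

definition reduced :: "nat \<Rightarrow> nat \<Rightarrow> top \<Rightarrow> nat \<Rightarrow> nat \<Rightarrow> nat \<Rightarrow> complex" where
  "reduced n m \<rho> k a b =
     (\<Sum>(f,g)\<in>{(f,g). f \<in> tidx n m \<and> g \<in> tidx n m \<and> f k = a \<and> g k = b \<and>
                       (\<forall>j\<in>{0..<m}. j \<noteq> k \<longrightarrow> f j = g j)}. \<rho> f g)"

definition pure_state :: "nat \<Rightarrow> (nat \<Rightarrow> nat \<Rightarrow> complex) \<Rightarrow> bool" where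
  "pure_state n \<sigma> \<longleftrightarrow> (\<exists>\<psi> :: nat \<Rightarrow> complex. (\<Sum>i<n. (cmod (\<psi> i))\<^sup>2) = 1 \<and>
      (\<forall>a<n. \<forall>b<n. \<sigma> a b = \<psi> a * cnj (\<psi> b)))"

definition RSC :: "nat \<Rightarrow> nat \<Rightarrow> top \<Rightarrow> bool" where
  "RSC n m \<rho> \<longleftrightarrow> (\<forall>k<m. \<forall>l<m. \<forall>a<n. \<forall>b<n. reduced n m \<rho> k a b = reduced n m \<rho> l a b)"

(* matrix of U_\<pi> \<rho> U_\<pi>^\<dagger>, where U_\<pi> (X_1\<otimes>..\<otimes>X_m) U_\<pi>^\<dagger> = X_\<pi>(1) \<otimes> .. \<otimes> X_\<pi>(m):
   on product operators, entry (f,g) equals \<Prod>_k X_{\<pi> k}(f k, g k) = \<rho>(f \<circ> inv \<pi>, g \<circ> inv \<pi>) *)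
definition perm_conj :: "(nat \<Rightarrow> nat) \<Rightarrow> top \<Rightarrow> top" where
  "perm_conj \<pi> \<rho> = (\<lambda>f g. \<rho> (f \<circ> inv \<pi>) (g \<circ> inv \<pi>))"

definition SSC :: "nat \<Rightarrow> nat \<Rightarrow> top \<Rightarrow> bool" where
  "SSC n m \<rho> \<longleftrightarrow> (\<forall>\<pi>. \<pi> permutes {0..<m} \<longrightarrow>
      (\<forall>f\<in>tidx n m. \<forall>g\<in>tidx n m. perm_conj \<pi> \<rho> f g = \<rho> f g))"

end

theory Submission
  imports Defs
begin

text \<open>Let \<open>|\<psi>\<rangle>\<langle>\<psi>|\<close> be the common reduced state and \<open>Q = 1 - |\<psi>\<rangle>\<langle>\<psi>|\<close>. Putting \<open>Q\<close> on the
  \<open>k\<close>-th factor gives \<open>tr (\<rho> Q\<^sub>k) = tr (\<rho>\<^sub>k Q) = 0\<close>, so by positivity \<open>\<rho> Q\<^sub>k = 0\<close>, i.e.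
  \<open>\<rho> = \<rho> |\<psi>\<rangle>\<langle>\<psi>|\<^sub>k\<close> for every \<open>k\<close>. Moving the column index coordinate by coordinate to a
  constant \<open>b\<close> with \<open>\<psi> b \<noteq> 0\<close> shows that each row of \<open>\<rho>\<close> is a multiple of \<open>\<langle>\<psi>\<^sup>\<otimes>\<^sup>m|\<close>;
  by Hermiticity \<open>\<rho> = K |\<psi>\<^sup>\<otimes>\<^sup>m\<rangle>\<langle>\<psi>\<^sup>\<otimes>\<^sup>m|\<close>, which is invariant under permuting the factors.\<close>

definition qform :: "'a set \<Rightarrow> ('a \<Rightarrow> 'a \<Rightarrow> complex) \<Rightarrow> ('a \<Rightarrow> complex) \<Rightarrow> complex" where
  "qform T \<rho> v = (\<Sum>f\<in>T. \<Sum>g\<in>T. cnj (v f) * \<rho> f g * v g)"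

lemma qform_add_delta:
  assumes "finite T" "f0 \<in> T" and herm: "\<forall>f\<in>T. \<forall>g\<in>T. \<rho> g f = cnj (\<rho> f g)"
  shows "qform T \<rho> (\<lambda>x. w x + (if x = f0 then t else 0))
       = qform T \<rho> w + t * cnj (\<Sum>g\<in>T. \<rho> f0 g * w g) + cnj t * (\<Sum>g\<in>T. \<rho> f0 g * w g)
         + cnj t * t * \<rho> f0 f0"
proof -
  define z where "z = (\<Sum>g\<in>T. \<rho> f0 g * w g)"
  define d where "d x = (if x = f0 then t else 0)" for x
  have wd: "(\<Sum>f\<in>T. \<Sum>g\<in>T. cnj (w f) * \<rho> f g * d g) = t * cnj z"
  proof -
    have "(\<Sum>g\<in>T. cnj (w f) * \<rho> f g * d g) = t * cnj (\<rho> f0 f * w f)" if "f \<in> T" for f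
      using assms(1,2) herm[rule_format, OF \<open>f0 \<in> T\<close> that] unfolding d_def
      by (simp add: if_distrib sum.delta' cong: if_cong)
    then show ?thesis
      unfolding z_def cnj_sum sum_distrib_left by (rule sum.cong[OF refl])
  qed
  have dw: "(\<Sum>f\<in>T. \<Sum>g\<in>T. cnj (d f) * \<rho> f g * w g) = cnj t * z"
  proof -
    have "(\<Sum>g\<in>T. cnj (d f) * \<rho> f g * w g) = (if f = f0 then cnj t * z else 0)" for f
      unfolding d_def z_def by (simp add: sum_distrib_left mult.assoc)
    then show ?thesis
      using assms(1,2) by (simp add: sum.delta')
  qed
  have dd: "(\<Sum>f\<in>T. \<Sum>g\<in>T. cnj (d f) * \<rho> f g * d g) = cnj t * t * \<rho> f0 f0"
  proof -
    have "(\<Sum>g\<in>T. cnj (d f) * \<rho> f g * d g) = (if f = f0 then cnj t * t * \<rho> f0 f0 else 0)" for f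
      using assms(1,2) unfolding d_def by (simp add: if_distrib sum.delta' cong: if_cong)
    then show ?thesis
      using assms(1,2) by (simp add: sum.delta')
  qed
  have "cnj (w f + d f) * \<rho> f g * (w g + d g) = cnj (w f) * \<rho> f g * w g + cnj (w f) * \<rho> f g * d g
      + cnj (d f) * \<rho> f g * w g + cnj (d f) * \<rho> f g * d g" for f g
    by (simp add: algebra_simps)
  then have "qform T \<rho> (\<lambda>x. w x + d x) = qform T \<rho> w + t * cnj z + cnj t * z + cnj t * t * \<rho> f0 f0"
    unfolding qform_def by (simp only: sum.distrib wd dw dd)
  then show ?thesis unfolding d_def z_def .
qed

text \<open>Perturbing \<open>w\<close> by \<open>-s z\<close> at \<open>f0\<close>, where \<open>z\<close> is the \<open>f0\<close>-entry of \<open>\<rho> w\<close>, turns the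
  form into \<open>s (s Re (\<rho> f0 f0) - 2) |z|\<^sup>2\<close>, which is negative for small \<open>s > 0\<close> unless \<open>z = 0\<close>.\<close>

lemma psd_qform_zero_imp_kernel:
  fixes \<rho> :: "'a \<Rightarrow> 'a \<Rightarrow> complex"
  assumes "finite T" "f0 \<in> T"
    and herm: "\<forall>f\<in>T. \<forall>g\<in>T. \<rho> g f = cnj (\<rho> f g)"
    and psd: "\<forall>v. 0 \<le> Re (qform T \<rho> v)"
    and zero: "Re (qform T \<rho> w) = 0"
  shows "(\<Sum>g\<in>T. \<rho> f0 g * w g) = 0"
proof -
  define z where "z = (\<Sum>g\<in>T. \<rho> f0 g * w g)"
  define r where "r = Re (\<rho> f0 f0)"
  define s :: real where "s = 1 / (\<bar>r\<bar> + 1)"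
  have s: "s > 0" "s * r < 1"
    unfolding s_def by (auto simp: field_simps)
  have "0 \<le> Re (qform T \<rho> (\<lambda>x. w x + (if x = f0 then - of_real s * z else 0)))"
    using psd by blast
  also have "\<dots> = s * (s * r - 2) * ((Re z)\<^sup>2 + (Im z)\<^sup>2)"
    using zero unfolding qform_add_delta[OF assms(1-3)] z_def[symmetric] r_def
    by (simp add: algebra_simps power2_eq_square)
  also have "\<dots> = s * (s * r - 2) * (cmod z)\<^sup>2"
    by (simp add: cmod_power2)
  finally have "0 \<le> s * (s * r - 2) * (cmod z)\<^sup>2" .
  moreover have "s * (s * r - 2) < 0"
    using s by (simp add: mult_pos_neg)
  ultimately have "z = 0"
    using s by (auto simp: zero_le_mult_iff)
  then show ?thesis
    unfolding z_def .
qed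

lemma finite_tidx: "finite (tidx n m)"
  unfolding tidx_def by (simp add: finite_PiE)

lemma tidx_less: "f \<in> tidx n m \<Longrightarrow> j < m \<Longrightarrow> f j < n"
  unfolding tidx_def by auto

lemma fun_upd_in_tidx: "f \<in> tidx n m \<Longrightarrow> k < m \<Longrightarrow> a < n \<Longrightarrow> f(k := a) \<in> tidx n m"
  unfolding tidx_def by (auto simp: PiE_iff extensional_def)

lemma tidx_eqI:
  "f \<in> tidx n m \<Longrightarrow> g \<in> tidx n m \<Longrightarrow> (\<And>j. j < m \<Longrightarrow> f j = g j) \<Longrightarrow> f = g"
  unfolding tidx_def by (rule PiE_ext) auto

lemma comp_inv_permutes_in_tidx:
  assumes "\<pi> permutes {0..<m}" "f \<in> tidx n m"
  shows "f \<circ> inv \<pi> \<in> tidx n m"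
proof -
  have \<pi>': "inv \<pi> permutes {0..<m}"
    using assms(1) by (rule permutes_inv)
  show ?thesis
    using assms(2) permutes_in_image[OF \<pi>'] permutes_not_in[OF \<pi>']
    unfolding tidx_def by (fastforce simp: PiE_iff extensional_def)
qed

definition agree_off :: "nat \<Rightarrow> nat \<Rightarrow> (nat \<Rightarrow> nat) \<Rightarrow> (nat \<Rightarrow> nat) \<Rightarrow> bool" where
  "agree_off m k f g \<longleftrightarrow> (\<forall>j\<in>{0..<m}. j \<noteq> k \<longrightarrow> f j = g j)"

lemma agree_off_sym: "agree_off m k f g \<longleftrightarrow> agree_off m k g f"
  unfolding agree_off_def by auto

lemma agree_off_trans: "agree_off m k f g \<Longrightarrow> agree_off m k g h \<Longrightarrow> agree_off m k f h"
  unfolding agree_off_def by auto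

lemma tidx_agree_off_eq_image:
  assumes "g \<in> tidx n m" "k < m"
  shows "{h \<in> tidx n m. agree_off m k h g} = (\<lambda>a. g(k := a)) ` {..<n}"
proof (intro equalityI subsetI)
  fix h assume h: "h \<in> {h \<in> tidx n m. agree_off m k h g}"
  then have "h = g(k := h k)"
    using assms by (intro tidx_eqI[of _ n m]) (auto simp: agree_off_def tidx_less fun_upd_in_tidx)
  moreover have "h k < n"
    using h assms(2) tidx_less by blast
  ultimately show "h \<in> (\<lambda>a. g(k := a)) ` {..<n}"
    by blast
qed (use assms in \<open>auto simp: agree_off_def fun_upd_in_tidx\<close>)

lemma sum_agree_off_slice:
  assumes "g \<in> tidx n m" "k < m"
  shows "(\<Sum>h\<in>tidx n m. if agree_off m k h g then F h else 0) = (\<Sum>a<n. F (g(k := a)))"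
proof -
  have "inj_on (\<lambda>a. g(k := a)) {..<n}"
    by (rule inj_onI) (metis fun_upd_same)
  then show ?thesis
    by (simp add: sum.inter_filter[OF finite_tidx, symmetric] tidx_agree_off_eq_image[OF assms]
        sum.reindex)
qed

lemma sum_agree_off_eq_sum_reduced:
  assumes "k < m"
  shows "(\<Sum>f\<in>tidx n m. \<Sum>g\<in>tidx n m. if agree_off m k f g then \<rho> f g * X (f k) (g k) else 0)
       = (\<Sum>a<n. \<Sum>b<n. reduced n m \<rho> k a b * X a b)"
proof -
  define S where "S = {p \<in> tidx n m \<times> tidx n m. agree_off m k (fst p) (snd p)}"
  define F where "F = (\<lambda>(f, g). \<rho> f g * X (f k) (g k))"
  have "finite S"
    by (simp add: S_def finite_tidx)
  have "(\<Sum>f\<in>tidx n m. \<Sum>g\<in>tidx n m. if agree_off m k f g then \<rho> f g * X (f k) (g k) else 0)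
      = sum F S"
    unfolding S_def F_def sum.cartesian_product
    by (simp add: sum.inter_filter finite_tidx split_def)
  also have "\<dots> = (\<Sum>y\<in>{..<n} \<times> {..<n}. sum F {p \<in> S. (fst p k, snd p k) = y})"
    by (rule sum.group[symmetric]) (use \<open>finite S\<close> assms in \<open>auto simp: S_def tidx_less\<close>)
  also have "\<dots> = (\<Sum>y\<in>{..<n} \<times> {..<n}. reduced n m \<rho> k (fst y) (snd y) * X (fst y) (snd y))"
    unfolding reduced_def agree_off_def[symmetric] sum_distrib_right
    by (intro sum.cong refl) (auto simp: S_def F_def intro!: sum.cong)
  finally show ?thesis
    by (simp add: sum.cartesian_product split_def)
qed

definition local_op :: "nat \<Rightarrow> nat \<Rightarrow> (nat \<Rightarrow> nat \<Rightarrow> complex) \<Rightarrow> top" where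
  "local_op m k A f g = (if agree_off m k f g then A (f k) (g k) else 0)"

lemma sum_local_op_mult_cnj:
  assumes "f \<in> tidx n m" "k < m"
  shows "(\<Sum>g\<in>tidx n m. local_op m k A f' g * cnj (local_op m k A f g))
       = local_op m k (\<lambda>a b. \<Sum>i<n. A a i * cnj (A b i)) f' f"
proof (cases "agree_off m k f' f")
  case True
  then have both: "agree_off m k f' g \<and> agree_off m k f g \<longleftrightarrow> agree_off m k g f" for g
    using agree_off_sym agree_off_trans by blast
  have "local_op m k A f' g * cnj (local_op m k A f g)
      = (if agree_off m k g f then A (f' k) (g k) * cnj (A (f k) (g k)) else 0)" for g
    using both[of g] unfolding local_op_def
    by (cases "agree_off m k f' g"; cases "agree_off m k f g") simp_all
  then show ?thesis
    using True by (simp add: sum_agree_off_slice[OF assms] local_op_def)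
next
  case False
  then have "\<not> (agree_off m k f' g \<and> agree_off m k f g)" for g
    using agree_off_sym agree_off_trans by blast
  then have "local_op m k A f' g * cnj (local_op m k A f g) = 0" for g
    unfolding local_op_def by auto
  then have "(\<Sum>g\<in>tidx n m. local_op m k A f' g * cnj (local_op m k A f g)) = 0"
    by (simp only: sum.neutral_const)
  also have "\<dots> = local_op m k (\<lambda>a b. \<Sum>i<n. A a i * cnj (A b i)) f' f"
    using False by (simp add: local_op_def)
  finally show ?thesis .
qed

lemma sum_qform_local_op_cols:
  assumes "k < m"
  shows "(\<Sum>g\<in>tidx n m. qform (tidx n m) \<rho> (\<lambda>f. local_op m k A f g))
       = (\<Sum>a<n. \<Sum>b<n. reduced n m \<rho> k a b * (\<Sum>i<n. A b i * cnj (A a i)))"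
proof -
  let ?T = "tidx n m"
  have "(\<Sum>g\<in>?T. qform ?T \<rho> (\<lambda>f. local_op m k A f g))
      = (\<Sum>f\<in>?T. \<Sum>f'\<in>?T. \<Sum>g\<in>?T. \<rho> f f' * (local_op m k A f' g * cnj (local_op m k A f g)))"
    unfolding qform_def
    by (subst sum.swap, rule sum.cong[OF refl], subst sum.swap) (simp add: algebra_simps)
  also have "\<dots> = (\<Sum>f\<in>?T. \<Sum>f'\<in>?T. if agree_off m k f f'
                     then \<rho> f f' * (\<Sum>i<n. A (f' k) i * cnj (A (f k) i)) else 0)"
    using assms by (intro sum.cong refl) (simp add: sum_distrib_left[symmetric]
        sum_local_op_mult_cnj local_op_def[of m k "\<lambda>a b. \<Sum>i<n. A a i * cnj (A b i)"] agree_off_sym)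
  also have "\<dots> = (\<Sum>a<n. \<Sum>b<n. reduced n m \<rho> k a b * (\<Sum>i<n. A b i * cnj (A a i)))"
    by (rule sum_agree_off_eq_sum_reduced[OF assms])
  finally show ?thesis .
qed

definition compl_proj :: "(nat \<Rightarrow> complex) \<Rightarrow> nat \<Rightarrow> nat \<Rightarrow> complex" where
  "compl_proj \<psi> a b = (if a = b then 1 else 0) - \<psi> a * cnj (\<psi> b)"

lemma compl_proj_mult_adjoint:
  assumes "finite I" "(\<Sum>i\<in>I. \<psi> i * cnj (\<psi> i)) = 1" "a \<in> I" "b \<in> I"
  shows "(\<Sum>i\<in>I. compl_proj \<psi> a i * cnj (compl_proj \<psi> b i)) = compl_proj \<psi> a b"
proof -
  have "compl_proj \<psi> a i * cnj (compl_proj \<psi> b i)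
      = (if a = i then (if b = i then 1 else 0) else 0) - (if b = i then \<psi> a * cnj (\<psi> i) else 0)
        - (if a = i then \<psi> i * cnj (\<psi> b) else 0) + (\<psi> i * cnj (\<psi> i)) * (\<psi> a * cnj (\<psi> b))" for i
    unfolding compl_proj_def by (simp add: algebra_simps)
  then show ?thesis
    using assms by (simp add: sum.distrib sum_subtractf sum_distrib_right[symmetric] compl_proj_def
        cong: if_cong)
qed

lemma sum_qform_local_compl_proj:
  assumes "k < m"
    and red: "\<forall>a<n. \<forall>b<n. reduced n m \<rho> k a b = \<psi> a * cnj (\<psi> b)"
    and unit: "(\<Sum>i<n. \<psi> i * cnj (\<psi> i)) = 1"
  shows "(\<Sum>g\<in>tidx n m. qform (tidx n m) \<rho> (\<lambda>f. local_op m k (compl_proj \<psi>) f g)) = 0"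
proof -
  have "(\<Sum>g\<in>tidx n m. qform (tidx n m) \<rho> (\<lambda>f. local_op m k (compl_proj \<psi>) f g))
      = (\<Sum>a<n. \<Sum>b<n. \<psi> a * cnj (\<psi> b) * compl_proj \<psi> b a)"
    using red unit by (simp add: sum_qform_local_op_cols[OF assms(1)] compl_proj_mult_adjoint)
  also have "\<dots> = (\<Sum>a<n. \<psi> a * cnj (\<psi> a))
      - (\<Sum>a<n. \<psi> a * cnj (\<psi> a)) * (\<Sum>b<n. \<psi> b * cnj (\<psi> b))"
  proof -
    have "\<psi> a * cnj (\<psi> b) * compl_proj \<psi> b a
        = (if b = a then \<psi> a * cnj (\<psi> a) else 0) - (\<psi> a * cnj (\<psi> a)) * (\<psi> b * cnj (\<psi> b))" for a b
      by (simp add: compl_proj_def algebra_simps)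
    then show ?thesis
      by (simp add: sum_subtractf sum.delta sum_product)
  qed
  also have "\<dots> = 0"
    using unit by simp
  finally show ?thesis .
qed

text \<open>The columns \<open>w\<close> of \<open>Q\<^sub>k\<close> satisfy \<open>\<Sum> |w\<rangle>\<langle>w| = Q\<^sub>k Q\<^sub>k\<^sup>* = Q\<^sub>k\<close>, so the forms of \<open>\<rho>\<close> on
  them add up to \<open>tr (\<rho>\<^sub>k Q) = 0\<close>. Each column thus lies in the kernel of \<open>\<rho>\<close>, which says
  \<open>\<rho> = \<rho> |\<psi>\<rangle>\<langle>\<psi>|\<^sub>k\<close>.\<close>

lemma column_identity_of_pure_reduced:
  assumes "k < m"
    and herm: "\<forall>f\<in>tidx n m. \<forall>g\<in>tidx n m. \<rho> g f = cnj (\<rho> f g)"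
    and psd: "\<forall>v. 0 \<le> Re (qform (tidx n m) \<rho> v)"
    and red: "\<forall>a<n. \<forall>b<n. reduced n m \<rho> k a b = \<psi> a * cnj (\<psi> b)"
    and unit: "(\<Sum>i<n. \<psi> i * cnj (\<psi> i)) = 1"
  shows "\<forall>f\<in>tidx n m. \<forall>g\<in>tidx n m. \<rho> f g = (\<Sum>a<n. \<rho> f (g(k := a)) * \<psi> a) * cnj (\<psi> (g k))"
proof (intro ballI)
  fix f g assume "f \<in> tidx n m" "g \<in> tidx n m"
  let ?T = "tidx n m"
  let ?w = "\<lambda>g f. local_op m k (compl_proj \<psi>) f g"
  have "(\<Sum>h\<in>?T. Re (qform ?T \<rho> (?w h))) = 0"
    using arg_cong[OF sum_qform_local_compl_proj[OF assms(1) red unit], of Re] by simp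
  then have "Re (qform ?T \<rho> (?w g)) = 0"
    using psd \<open>g \<in> ?T\<close> by (simp add: sum_nonneg_eq_0_iff finite_tidx)
  then have "(\<Sum>h\<in>?T. \<rho> f h * ?w g h) = 0"
    by (rule psd_qform_zero_imp_kernel[OF finite_tidx \<open>f \<in> ?T\<close> herm psd])
  moreover have "\<rho> f h * ?w g h
      = (if agree_off m k h g then \<rho> f h * compl_proj \<psi> (h k) (g k) else 0)" for h
    by (simp add: local_op_def)
  moreover have "\<rho> f (g(k := a)) * compl_proj \<psi> a (g k)
      = (if a = g k then \<rho> f g else 0) - \<rho> f (g(k := a)) * \<psi> a * cnj (\<psi> (g k))" for a
    by (simp add: compl_proj_def algebra_simps)
  ultimately show "\<rho> f g = (\<Sum>a<n. \<rho> f (g(k := a)) * \<psi> a) * cnj (\<psi> (g k))"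
    using tidx_less[OF \<open>g \<in> ?T\<close> assms(1)]
    by (simp add: sum_agree_off_slice[OF \<open>g \<in> ?T\<close> assms(1)] sum_subtractf sum_distrib_right sum.delta')
qed

lemma column_identity_swap:
  assumes col: "\<forall>g\<in>tidx n m. \<rho> f g = (\<Sum>a<n. \<rho> f (g(k := a)) * \<psi> a) * cnj (\<psi> (g k))"
    and "g \<in> tidx n m" "k < m" "b < n"
  shows "\<rho> f g * cnj (\<psi> b) = \<rho> f (g(k := b)) * cnj (\<psi> (g k))"
proof -
  have "g(k := b) \<in> tidx n m"
    using assms(2-4) by (rule fun_upd_in_tidx)
  then have "\<rho> f (g(k := b)) = (\<Sum>a<n. \<rho> f (g(k := a)) * \<psi> a) * cnj (\<psi> b)"
    using col by simp
  moreover have "\<rho> f g = (\<Sum>a<n. \<rho> f (g(k := a)) * \<psi> a) * cnj (\<psi> (g k))"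
    using col \<open>g \<in> tidx n m\<close> by blast
  ultimately show ?thesis
    by simp
qed

lemma column_identities_imp_right_factor:
  assumes col: "\<forall>k<m. \<forall>g\<in>tidx n m. \<rho> f g = (\<Sum>a<n. \<rho> f (g(k := a)) * \<psi> a) * cnj (\<psi> (g k))"
    and "g \<in> tidx n m" "b < n"
  shows "p \<le> m \<Longrightarrow>
    \<rho> f g * cnj (\<psi> b) ^ p = \<rho> f (\<lambda>j. if j < p then b else g j) * (\<Prod>j<p. cnj (\<psi> (g j)))"
proof (induction p)
  case 0
  then show ?case by simp
next
  case (Suc p)
  define g' where "g' = (\<lambda>j. if j < p then b else g j)"
  have "g' \<in> tidx n m"
    using assms(2,3) Suc.prems unfolding g'_def tidx_def by (auto simp: PiE_iff extensional_def)
  moreover have "g'(p := b) = (\<lambda>j. if j < Suc p then b else g j)"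
    by (auto simp: g'_def)
  ultimately have "\<rho> f g' * cnj (\<psi> b) = \<rho> f (\<lambda>j. if j < Suc p then b else g j) * cnj (\<psi> (g p))"
    using column_identity_swap[of n m \<rho> f p \<psi> g' b] col Suc.prems assms(3) by (simp add: g'_def)
  moreover have "\<rho> f g * cnj (\<psi> b) ^ p = \<rho> f g' * (\<Prod>j<p. cnj (\<psi> (g j)))"
    using Suc by (simp add: g'_def)
  ultimately show ?case
    by (simp add: algebra_simps)
qed

definition tensor_power :: "(nat \<Rightarrow> complex) \<Rightarrow> nat \<Rightarrow> (nat \<Rightarrow> nat) \<Rightarrow> complex" where
  "tensor_power \<psi> m f = (\<Prod>j<m. \<psi> (f j))"

lemma tensor_power_comp_permutes:
  "\<pi> permutes {0..<m} \<Longrightarrow> tensor_power \<psi> m (f \<circ> \<pi>) = tensor_power \<psi> m f"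
  unfolding tensor_power_def lessThan_atLeast0 using prod.permute[of \<pi> "{0..<m}" "\<lambda>j. \<psi> (f j)"]
  by (simp add: comp_def)

lemma column_identities_imp_outer_product:
  assumes herm: "\<forall>f\<in>tidx n m. \<forall>g\<in>tidx n m. \<rho> g f = cnj (\<rho> f g)"
    and col: "\<forall>k<m. \<forall>f\<in>tidx n m. \<forall>g\<in>tidx n m.
                \<rho> f g = (\<Sum>a<n. \<rho> f (g(k := a)) * \<psi> a) * cnj (\<psi> (g k))"
    and "b < n" "\<psi> b \<noteq> 0"
  obtains K where "\<forall>f\<in>tidx n m. \<forall>g\<in>tidx n m.
                     \<rho> f g = K * tensor_power \<psi> m f * cnj (tensor_power \<psi> m g)"
proof
  let ?T = "tidx n m" and ?c = "cnj (\<psi> b) ^ m"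
  define g0 :: "nat \<Rightarrow> nat" where "g0 j = (if j < m then b else undefined)" for j
  have "g0 \<in> ?T"
    using \<open>b < n\<close> unfolding g0_def tidx_def by auto
  have right: "\<rho> f g * ?c = \<rho> f g0 * cnj (tensor_power \<psi> m g)" if "f \<in> ?T" "g \<in> ?T" for f g
  proof -
    have "(\<lambda>j. if j < m then b else g j) = g0"
      using \<open>g \<in> ?T\<close> unfolding g0_def tidx_def by (auto simp: PiE_iff extensional_def)
    then show ?thesis
      using column_identities_imp_right_factor[of m n \<rho> f \<psi> g b m] col that \<open>b < n\<close>
      by (simp add: tensor_power_def)
  qed
  have left: "\<rho> f g0 * cnj ?c = cnj (\<rho> g0 g0) * tensor_power \<psi> m f" if "f \<in> ?T" for f
  proof -
    have "\<rho> f g0 = cnj (\<rho> g0 f)"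
      using herm that \<open>g0 \<in> ?T\<close> by blast
    then show ?thesis
      using arg_cong[OF right[OF \<open>g0 \<in> ?T\<close> that], of cnj] by simp
  qed
  have "?c * cnj ?c \<noteq> 0"
    using \<open>\<psi> b \<noteq> 0\<close> by simp
  show "\<forall>f\<in>?T. \<forall>g\<in>?T. \<rho> f g
      = cnj (\<rho> g0 g0) / (?c * cnj ?c) * tensor_power \<psi> m f * cnj (tensor_power \<psi> m g)"
  proof (intro ballI)
    fix f g assume "f \<in> ?T" "g \<in> ?T"
    have "\<rho> f g * (?c * cnj ?c) = (\<rho> f g * ?c) * cnj ?c"
      by (simp only: mult.assoc)
    also have "\<dots> = (\<rho> f g0 * cnj ?c) * cnj (tensor_power \<psi> m g)"
      by (simp only: right[OF \<open>f \<in> ?T\<close> \<open>g \<in> ?T\<close>] ac_simps)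
    also have "\<dots> = cnj (\<rho> g0 g0) * tensor_power \<psi> m f * cnj (tensor_power \<psi> m g)"
      by (simp only: left[OF \<open>f \<in> ?T\<close>])
    finally show "\<rho> f g = cnj (\<rho> g0 g0) / (?c * cnj ?c) * tensor_power \<psi> m f * cnj (tensor_power \<psi> m g)"
      using \<open>?c * cnj ?c \<noteq> 0\<close> by (simp add: field_simps)
  qed
qed

lemma outer_tensor_power_imp_SSC:
  assumes "\<forall>f\<in>tidx n m. \<forall>g\<in>tidx n m. \<rho> f g = K * tensor_power \<psi> m f * cnj (tensor_power \<psi> m g)"
  shows "SSC n m \<rho>"
  unfolding SSC_def perm_conj_def
proof (intro allI impI ballI)
  fix \<pi> f g assume \<pi>: "\<pi> permutes {0..<m}" and "f \<in> tidx n m" "g \<in> tidx n m"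
  moreover have "f \<circ> inv \<pi> \<in> tidx n m" "g \<circ> inv \<pi> \<in> tidx n m"
    using \<pi> \<open>f \<in> tidx n m\<close> \<open>g \<in> tidx n m\<close> by (simp_all add: comp_inv_permutes_in_tidx)
  moreover have "tensor_power \<psi> m (h \<circ> inv \<pi>) = tensor_power \<psi> m h" for h
    using permutes_inv[OF \<pi>] by (rule tensor_power_comp_permutes)
  ultimately show "\<rho> (f \<circ> inv \<pi>) (g \<circ> inv \<pi>) = \<rho> f g"
    using assms by simp
qed

lemma unit_vector_nonzero_entry:
  assumes "(\<Sum>i<n. \<psi> i * cnj (\<psi> i)) = 1"
  obtains b where "b < n" "\<psi> b \<noteq> 0"
proof (rule ccontr)
  assume "\<not> thesis"
  with that have "\<forall>i<n. \<psi> i = 0"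
    by blast
  then have "(\<Sum>i<n. \<psi> i * cnj (\<psi> i)) = 0"
    by simp
  with assms show False
    by simp
qed

lemma pure_stateE:
  assumes "pure_state n \<sigma>"
  obtains \<psi> where "(\<Sum>i<n. \<psi> i * cnj (\<psi> i)) = 1" "\<forall>a<n. \<forall>b<n. \<sigma> a b = \<psi> a * cnj (\<psi> b)"
proof -
  obtain \<psi> where unit: "(\<Sum>i<n. (cmod (\<psi> i))\<^sup>2) = 1"
    and "\<forall>a<n. \<forall>b<n. \<sigma> a b = \<psi> a * cnj (\<psi> b)"
    using assms unfolding pure_state_def by blast
  moreover have "(\<Sum>i<n. \<psi> i * cnj (\<psi> i)) = of_real (\<Sum>i<n. (cmod (\<psi> i))\<^sup>2)"
    unfolding of_real_sum complex_norm_square ..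
  ultimately show ?thesis
    using that by simp
qed

theorem proposition3:
  fixes n m :: nat and \<rho> :: top
  assumes "n \<ge> 2" and "m \<ge> 2"
    and "density_op n m \<rho>"
    and "RSC n m \<rho>"
    and "\<forall>k<m. pure_state n (reduced n m \<rho> k)"
  shows "SSC n m \<rho>"
proof -
  have herm: "\<forall>f\<in>tidx n m. \<forall>g\<in>tidx n m. \<rho> g f = cnj (\<rho> f g)"
    and psd: "\<forall>v. 0 \<le> Re (qform (tidx n m) \<rho> v)"
    using assms(3) unfolding density_op_def qform_def by blast+
  have "0 < m"
    using assms(2) by simp
  with assms(5) have "pure_state n (reduced n m \<rho> 0)"
    by blast
  then obtain \<psi> where unit: "(\<Sum>i<n. \<psi> i * cnj (\<psi> i)) = 1"
    and red0: "\<forall>a<n. \<forall>b<n. reduced n m \<rho> 0 a b = \<psi> a * cnj (\<psi> b)"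
    by (rule pure_stateE)
  have red: "\<forall>a<n. \<forall>b<n. reduced n m \<rho> k a b = \<psi> a * cnj (\<psi> b)" if "k < m" for k
    using red0 assms(4) that \<open>0 < m\<close> unfolding RSC_def by metis
  have col: "\<forall>k<m. \<forall>f\<in>tidx n m. \<forall>g\<in>tidx n m.
               \<rho> f g = (\<Sum>a<n. \<rho> f (g(k := a)) * \<psi> a) * cnj (\<psi> (g k))"
    using column_identity_of_pure_reduced[OF _ herm psd red unit] by blast
  obtain b where "b < n" "\<psi> b \<noteq> 0"
    using unit by (rule unit_vector_nonzero_entry)
  then obtain K where "\<forall>f\<in>tidx n m. \<forall>g\<in>tidx n m.
                         \<rho> f g = K * tensor_power \<psi> m f * cnj (tensor_power \<psi> m g)"
    by (rule column_identities_imp_outer_product[OF herm col])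
  then show ?thesis
    by (rule outer_tensor_power_imp_SSC)
qed

end
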